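(* Consider the Markov chain on the state space $\{0,1,2,\dots\}$ with infinite transition probability matrix $\mathbf P=(P_{ij})$ given by: $P_{00}=5/6$, $P_{01}=1/6$; $P_{10}=5/6$, $P_{12}=1/6$; for every $i\ge 2$: $P_{i0}=2/3$, $P_{i,i-1}=1/6$, $P_{i,i+1}=1/6$; all other entries $0$. Then the steady state probability vector $\vec\pi=(\pi_0,\pi_1,\pi_2,\dots)$ (the probability vector with $\vec\pi=\vec\pi\mathbf P$) is given by $\pi_i=\beta^i-\beta^{i+1}$ for $i=0,1,2,\dots$, where $\beta=3-2\sqrt2$. *)

theory Defs
  imports Complex_Main
begin

definition P :: "nat \<Rightarrow> nat \<Rightarrow> real" where
  "P i j =
     (if i = 0 then (if j = 0 then 5/6 else if j = 1 then 1/6 else 0)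
      else if i = 1 then (if j = 0 then 5/6 else if j = 2 then 1/6 else 0)
      else (if j = 0 then 2/3 else if j = i - 1 then 1/6
            else if j = i + 1 then 1/6 else 0))"

definition stationary_prob_vector :: "(nat \<Rightarrow> nat \<Rightarrow> real) \<Rightarrow> (nat \<Rightarrow> real) \<Rightarrow> bool" where
  "stationary_prob_vector Q \<pi> \<longleftrightarrow>
     (\<forall>i. 0 \<le> \<pi> i) \<and> \<pi> sums 1 \<and>
     (\<forall>j. (\<lambda>i. \<pi> i * Q i j) sums \<pi> j)"

end

theory Submission
  imports Defs
begin

text \<open>
  For j \<ge> 1 the j-th column of P has the entries 1/6 in rows j - 1 and j + 1 only, so
  stationarity says \<pi>(n+2) = 6 \<pi>(n+1) - \<pi>(n). The characteristic polynomial t^2 - 6t + 1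
  has the roots \<beta> = 3 - 2 sqrt 2 < 1 and 1/\<beta> = 6 - \<beta> > 1; since \<pi> is summable it tends
  to 0, which kills the component along the root 1/\<beta>. Hence \<pi> is geometric with ratio \<beta>,
  and \<pi> sums 1 fixes the factor 1 - \<beta>. Conversely this vector satisfies the equation of
  column 0 as well, because \<beta>^2 = 6\<beta> - 1.
\<close>

lemma P_column_Suc: "P i (Suc j) = (if i = j \<or> i = j + 2 then 1/6 else 0)"
  unfolding P_def by auto

lemma P_column_0: "P i 0 = 2/3 + (if i \<le> 1 then 1/6 else 0)"
  unfolding P_def by auto

lemma P_column_Suc_sums: "(\<lambda>i. \<pi> i * P i (Suc j)) sums ((\<pi> j + \<pi> (j + 2)) / 6)"
proof -
  have "(\<lambda>i. \<pi> i * P i (Suc j)) sums (\<Sum>i\<in>{j, j + 2}. \<pi> i * P i (Suc j))"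
    by (rule sums_finite) (auto simp: P_column_Suc)
  then show ?thesis
    by (simp add: P_column_Suc add_divide_distrib)
qed

lemma P_column_0_sums:
  assumes "\<pi> sums s"
  shows "(\<lambda>i. \<pi> i * P i 0) sums (2/3 * s + (\<pi> 0 + \<pi> 1) / 6)"
proof -
  have "(\<lambda>i. 2/3 * \<pi> i + (if i \<le> 1 then \<pi> i / 6 else 0))
          sums (2/3 * s + (\<Sum>i\<in>{0, 1}. if i \<le> 1 then \<pi> i / 6 else 0))"
    by (intro sums_add sums_mult assms sums_finite) auto
  moreover have "(\<lambda>i. 2/3 * \<pi> i + (if i \<le> 1 then \<pi> i / 6 else 0)) = (\<lambda>i. \<pi> i * P i 0)"
    by (auto simp: P_column_0 algebra_simps)
  ultimately show ?thesis
    by (simp add: add_divide_distrib)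
qed

lemma stationary_prob_vector_P_iff:
  "stationary_prob_vector P \<pi> \<longleftrightarrow>
     (\<forall>i. 0 \<le> \<pi> i) \<and> \<pi> sums 1 \<and> \<pi> 0 = 2/3 + (\<pi> 0 + \<pi> 1) / 6 \<and>
     (\<forall>n. \<pi> (n + 2) = 6 * \<pi> (n + 1) - \<pi> n)"
proof -
  have column_Suc: "(\<lambda>i. \<pi> i * P i (Suc n)) sums \<pi> (Suc n) \<longleftrightarrow>
                    \<pi> (n + 2) = 6 * \<pi> (n + 1) - \<pi> n" for n
  proof -
    have "(\<lambda>i. \<pi> i * P i (Suc n)) sums \<pi> (Suc n) \<longleftrightarrow> \<pi> (Suc n) = (\<pi> n + \<pi> (n + 2)) / 6"
      using P_column_Suc_sums[of \<pi> n] sums_unique2 by metis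
    also have "\<dots> \<longleftrightarrow> \<pi> (n + 2) = 6 * \<pi> (n + 1) - \<pi> n"
      by auto
    finally show ?thesis .
  qed
  have column_0: "(\<lambda>i. \<pi> i * P i 0) sums \<pi> 0 \<longleftrightarrow> \<pi> 0 = 2/3 + (\<pi> 0 + \<pi> 1) / 6"
    if "\<pi> sums 1"
    using P_column_0_sums[OF that] sums_unique2 by (metis mult_1_right)
  have "(\<forall>j. (\<lambda>i. \<pi> i * P i j) sums \<pi> j) \<longleftrightarrow>
        (\<lambda>i. \<pi> i * P i 0) sums \<pi> 0 \<and> (\<forall>n. (\<lambda>i. \<pi> i * P i (Suc n)) sums \<pi> (Suc n))"
    by (metis nat.exhaust)
  then show ?thesis
    unfolding stationary_prob_vector_def using column_Suc column_0 by auto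
qed

lemma geometric_tendsto_zero_imp_zero:
  fixes \<gamma> c :: real
  assumes "1 \<le> \<bar>\<gamma>\<bar>" and "(\<lambda>n. \<gamma> ^ n * c) \<longlonglongrightarrow> 0"
  shows "c = 0"
proof -
  have "(\<lambda>n. \<bar>\<gamma> ^ n * c\<bar>) \<longlonglongrightarrow> 0"
    using tendsto_rabs[OF assms(2)] by simp
  moreover have "\<bar>c\<bar> \<le> \<bar>\<gamma> ^ n * c\<bar>" for n
  proof -
    have "1 * \<bar>c\<bar> \<le> \<bar>\<gamma>\<bar> ^ n * \<bar>c\<bar>"
      using assms(1) by (intro mult_right_mono one_le_power) simp_all
    then show ?thesis
      by (simp add: abs_mult power_abs)
  qed
  ultimately have "\<bar>c\<bar> \<le> 0"
    by (intro LIMSEQ_le_const) auto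
  then show ?thesis by simp
qed

lemma null_recurrence_solution_geometric:
  fixes x :: "nat \<Rightarrow> real"
  assumes rec: "\<And>n. x (n + 2) = (\<beta> + \<gamma>) * x (n + 1) - \<beta> * \<gamma> * x n"
    and "1 \<le> \<bar>\<gamma>\<bar>" and "x \<longlonglongrightarrow> 0"
  shows "x n = x 0 * \<beta> ^ n"
proof -
  define d where "d n = x (Suc n) - \<beta> * x n" for n
  have d_geometric: "d n = \<gamma> ^ n * d 0" for n
  proof (induction n)
    case (Suc n)
    have "d (Suc n) = \<gamma> * d n"
      using rec[of n] by (simp add: d_def numeral_2_eq_2 algebra_simps)
    then show ?case
      using Suc by simp
  qed simp
  have "d \<longlonglongrightarrow> 0 - \<beta> * 0"
    unfolding d_def by (intro tendsto_diff tendsto_mult_left assms(3) LIMSEQ_Suc[OF assms(3)])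
  then have "(\<lambda>n. \<gamma> ^ n * d 0) \<longlonglongrightarrow> 0"
    by (simp add: d_geometric[symmetric])
  then have "d 0 = 0"
    by (rule geometric_tendsto_zero_imp_zero[OF assms(2)])
  then have "x (Suc n) = \<beta> * x n" for n
    using d_geometric[of n] by (simp add: d_def)
  then show ?thesis
    by (induction n) simp_all
qed

lemma stationary_prob_vector_P_iff_geometric:
  fixes \<beta> :: real
  assumes root: "\<beta>\<^sup>2 = 6 * \<beta> - 1" and "0 < \<beta>" "\<beta> < 1"
  shows "stationary_prob_vector P \<pi> \<longleftrightarrow> \<pi> = (\<lambda>i. (1 - \<beta>) * \<beta> ^ i)"
proof
  assume stat: "stationary_prob_vector P \<pi>"
  then have sums_1: "\<pi> sums 1"
    by (simp add: stationary_prob_vector_def)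
  have "\<pi> i = \<pi> 0 * \<beta> ^ i" for i
  proof (rule null_recurrence_solution_geometric)
    show "\<pi> (n + 2) = (\<beta> + (6 - \<beta>)) * \<pi> (n + 1) - \<beta> * (6 - \<beta>) * \<pi> n" for n
    proof -
      have "\<beta> * (6 - \<beta>) = 1"
        using root by (simp add: power2_eq_square algebra_simps)
      then show ?thesis
        using stat by (simp add: stationary_prob_vector_P_iff)
    qed
    show "1 \<le> \<bar>6 - \<beta>\<bar>"
      using \<open>\<beta> < 1\<close> by simp
    show "\<pi> \<longlonglongrightarrow> 0"
      using sums_1 summable_LIMSEQ_zero sums_summable by blast
  qed
  then have geometric: "\<pi> = (\<lambda>i. \<pi> 0 * \<beta> ^ i)"
    by (rule ext)
  have "\<pi> sums (\<pi> 0 / (1 - \<beta>))"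
    using sums_mult[OF geometric_sums, of \<beta> "\<pi> 0"] assms by (subst geometric) simp
  then have "\<pi> 0 / (1 - \<beta>) = 1"
    using sums_1 sums_unique2 by blast
  then have "\<pi> 0 = 1 - \<beta>"
    using \<open>\<beta> < 1\<close> by (simp add: field_simps)
  with geometric show "\<pi> = (\<lambda>i. (1 - \<beta>) * \<beta> ^ i)"
    by simp
next
  assume \<pi>: "\<pi> = (\<lambda>i. (1 - \<beta>) * \<beta> ^ i)"
  have "\<pi> sums 1"
    using sums_mult[OF geometric_sums, of \<beta> "1 - \<beta>"] assms \<pi> by simp
  moreover have "\<pi> 0 = 2/3 + (\<pi> 0 + \<pi> 1) / 6"
    using root \<pi> by (simp add: power2_eq_square field_simps)
  moreover have "\<pi> (n + 2) = 6 * \<pi> (n + 1) - \<pi> n" for n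
  proof -
    have "\<beta> ^ (n + 2) = \<beta> ^ n * \<beta>\<^sup>2"
      by (rule power_add)
    also have "\<dots> = 6 * \<beta> ^ (n + 1) - \<beta> ^ n"
      unfolding root by (simp add: algebra_simps)
    finally have "\<pi> (n + 2) = (1 - \<beta>) * (6 * \<beta> ^ (n + 1) - \<beta> ^ n)"
      unfolding \<pi> by (rule arg_cong)
    then show ?thesis
      unfolding \<pi> by (simp add: algebra_simps)
  qed
  ultimately show "stationary_prob_vector P \<pi>"
    using assms \<pi> by (simp add: stationary_prob_vector_P_iff)
qed

lemma three_minus_two_sqrt2_small_root:
  fixes \<beta> :: real
  assumes "\<beta> = 3 - 2 * sqrt 2"
  shows "\<beta>\<^sup>2 = 6 * \<beta> - 1" and "0 < \<beta>" and "\<beta> < 1"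
proof -
  have "sqrt 2 < 3/2"
    by (rule real_less_lsqrt) (simp_all add: power2_eq_square)
  moreover have "1 < sqrt (2::real)"
    by simp
  ultimately show "0 < \<beta>" and "\<beta> < 1"
    using assms by simp_all
  show "\<beta>\<^sup>2 = 6 * \<beta> - 1"
    unfolding assms by (simp add: power2_eq_square algebra_simps)
qed

theorem theorem4p1:
  fixes \<beta> :: real
  assumes "\<beta> = 3 - 2 * sqrt 2"
  shows "\<forall>\<pi>. stationary_prob_vector P \<pi> \<longleftrightarrow> (\<forall>i. \<pi> i = \<beta> ^ i - \<beta> ^ (i + 1))"
proof
  fix \<pi> :: "nat \<Rightarrow> real"
  have "(\<forall>i. \<pi> i = \<beta> ^ i - \<beta> ^ (i + 1)) \<longleftrightarrow> \<pi> = (\<lambda>i. (1 - \<beta>) * \<beta> ^ i)"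
    by (auto simp: algebra_simps)
  then show "stationary_prob_vector P \<pi> \<longleftrightarrow> (\<forall>i. \<pi> i = \<beta> ^ i - \<beta> ^ (i + 1))"
    using stationary_prob_vector_P_iff_geometric three_minus_two_sqrt2_small_root[OF assms] by simp
qed

end
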